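(* Let $s\ge2$, $1\le t\le k-1$, $N$ a positive multiple of $s^t$, $\lambda=N/s^t$, and $p_{\max}$ a positive integer with $p_{\max}\le\lambda$. Then the formulation symmetry group $G(k,s,t)$ of ILP (OA) equals the group $G^{\rm iso}(k,s)\cong S_s\wr S_k$, and $G(k,s,t)$ is contained in the symmetry group $G(k,s,t)^{\rm LP}$ of the LP relaxation of ILP (OA); hence $|G(k,s,t)^{\rm LP}|\ge k!(s!)^k$.
   Context: Variables $x_{\mathbf{i}}$ are indexed by $\mathbf{i}=(i_1,\dots,i_k)\in\{0,\dots,s-1\}^k$ ($x_{\mathbf i}$ is the number of times the symbol combination $\mathbf i$ occurs as a row of an $N\times k$ array). ILP (OA) is: minimize $\sum_{\mathbf i}x_{\mathbf i}$ subject to, for every $t$-subset $J\subseteq\{1,\dots,k\}$ and every $a\in\{0,\dots,s-1\}^J$, $\sum_{\mathbf i:\ i_j=a_j\ \forall j\in J}x_{\mathbf i}=\lambda$; $0\le x_{\mathbf i}\le p_{\max}$; $x_{\mathbf i}\in\mathbb{Z}$. Its LP relaxation drops integrality; with feasible set $\mathcal F$, $G(k,s,t)^{\rm LP}$ is the set of permutations $\pi$ of the index set such that $\pi(x)\in\mathcal F$ and the objective value is preserved for all $x\in\mathcal F$, where $\pi(x)_{\mathbf i}=x_{\pi^{-1}(\mathbf i)}$. For an LP/ILP written as min $c^{\top}x$ s.t. $Ax=b$, $Bx\le d$, the formulation symmetry group is the set of variable permutations $\pi$ with $\pi(c)=c$ for which there exist row permutations $\sigma,\tau$ of $A$ and $B$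 such that permuting the columns of $A,B$ by $\pi$ and rows by $\sigma,\tau$ returns $A,B$, with $b,d$ preserved by $\sigma,\tau$. $G^{\rm iso}(k,s)$ is the group of permutations of $\{0,\dots,s-1\}^k$ generated by permuting coordinates and permuting the symbols $\{0,\dots,s-1\}$ independently within each coordinate (isomorphism operations); it has order $k!(s!)^k$. *)

theory Defs
  imports Complex_Main "HOL-Library.FuncSet" "HOL-Combinatorics.Permutations"
begin

text \<open>Index set: rows of an N x k array over symbols 0..s-1, i.e. lists of length k
  with entries < s.  Coordinates are 0,...,k-1.\<close>
definition idx :: "nat \<Rightarrow> nat \<Rightarrow> nat list set" where
  "idx k s = {xs. length xs = k \<and> set xs \<subseteq> {..<s}}"

text \<open>Generic formulation symmetry group of  min c^T x  s.t.  A x = b,  B x \<le> d,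
  with variables indexed by I, rows of A indexed by RA, rows of B indexed by RB.\<close>
definition formulation_sym ::
  "'i set \<Rightarrow> ('i \<Rightarrow> real) \<Rightarrow> 'r set \<Rightarrow> ('r \<Rightarrow> 'i \<Rightarrow> real) \<Rightarrow> ('r \<Rightarrow> real)
   \<Rightarrow> 'q set \<Rightarrow> ('q \<Rightarrow> 'i \<Rightarrow> real) \<Rightarrow> ('q \<Rightarrow> real) \<Rightarrow> ('i \<Rightarrow> 'i) set" where
  "formulation_sym I c RA A b RB B d =
     {\<pi>. \<pi> permutes I \<and> (\<forall>i\<in>I. c (\<pi> i) = c i)
        \<and> (\<exists>\<sigma>. \<sigma> permutes RA \<and> (\<forall>r\<in>RA. b (\<sigma> r) = b r \<and> (\<forall>i\<in>I. A (\<sigma> r) (\<pi> i) = A r i)))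
        \<and> (\<exists>\<tau>. \<tau> permutes RB \<and> (\<forall>r\<in>RB. d (\<tau> r) = d r \<and> (\<forall>i\<in>I. B (\<tau> r) (\<pi> i) = B r i)))}"

definition oa_c :: "nat list \<Rightarrow> real" where "oa_c i = 1"

definition oa_rowsA :: "nat \<Rightarrow> nat \<Rightarrow> nat \<Rightarrow> (nat set \<times> (nat \<Rightarrow> nat)) set" where
  "oa_rowsA k s t = {(J, a). J \<subseteq> {..<k} \<and> card J = t \<and> a \<in> (J \<rightarrow>\<^sub>E {..<s})}"

definition oa_A :: "nat set \<times> (nat \<Rightarrow> nat) \<Rightarrow> nat list \<Rightarrow> real" where
  "oa_A r i = (if \<forall>j\<in>fst r. i ! j = snd r j then 1 else 0)"

definition oa_b :: "nat \<Rightarrow> nat set \<times> (nat \<Rightarrow> nat) \<Rightarrow> real" where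
  "oa_b lam r = real lam"

text \<open>Inequality rows: (i, True) is x_i \<le> pmax, (i, False) is -x_i \<le> 0.\<close>
definition oa_rowsB :: "nat \<Rightarrow> nat \<Rightarrow> (nat list \<times> bool) set" where
  "oa_rowsB k s = idx k s \<times> UNIV"

definition oa_B :: "nat list \<times> bool \<Rightarrow> nat list \<Rightarrow> real" where
  "oa_B r i = (if i = fst r then (if snd r then 1 else -1) else 0)"

definition oa_d :: "nat \<Rightarrow> nat list \<times> bool \<Rightarrow> real" where
  "oa_d pmax r = (if snd r then real pmax else 0)"

definition G_form :: "nat \<Rightarrow> nat \<Rightarrow> nat \<Rightarrow> nat \<Rightarrow> nat \<Rightarrow> (nat list \<Rightarrow> nat list) set" where
  "G_form k s t lam pmax =
     formulation_sym (idx k s) oa_c (oa_rowsA k s t) oa_A (oa_b lam) (oa_rowsB k s) oa_B (oa_d pmax)"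

definition oa_LP_feasible :: "nat \<Rightarrow> nat \<Rightarrow> nat \<Rightarrow> nat \<Rightarrow> nat \<Rightarrow> (nat list \<Rightarrow> real) set" where
  "oa_LP_feasible k s t lam pmax =
     {x. (\<forall>i. i \<notin> idx k s \<longrightarrow> x i = 0)
       \<and> (\<forall>J a. J \<subseteq> {..<k} \<and> card J = t \<and> a \<in> (J \<rightarrow>\<^sub>E {..<s}) \<longrightarrow>
              (\<Sum>i\<in>{i\<in>idx k s. \<forall>j\<in>J. i ! j = a j}. x i) = real lam)
       \<and> (\<forall>i\<in>idx k s. 0 \<le> x i \<and> x i \<le> real pmax)}"

definition perm_vars :: "(nat list \<Rightarrow> nat list) \<Rightarrow> (nat list \<Rightarrow> real) \<Rightarrow> nat list \<Rightarrow> real" where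
  "perm_vars \<pi> x = (\<lambda>i. x (inv \<pi> i))"

definition G_LP :: "nat \<Rightarrow> nat \<Rightarrow> nat \<Rightarrow> nat \<Rightarrow> nat \<Rightarrow> (nat list \<Rightarrow> nat list) set" where
  "G_LP k s t lam pmax =
     {\<pi>. \<pi> permutes idx k s \<and>
        (\<forall>x\<in>oa_LP_feasible k s t lam pmax.
            perm_vars \<pi> x \<in> oa_LP_feasible k s t lam pmax \<and>
            (\<Sum>i\<in>idx k s. perm_vars \<pi> x i) = (\<Sum>i\<in>idx k s. x i))}"

definition coord_perm :: "nat \<Rightarrow> nat \<Rightarrow> (nat \<Rightarrow> nat) \<Rightarrow> nat list \<Rightarrow> nat list" where
  "coord_perm k s \<sigma> xs = (if xs \<in> idx k s then map (\<lambda>j. xs ! \<sigma> j) [0..<k] else xs)"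

definition sym_perm :: "nat \<Rightarrow> nat \<Rightarrow> nat \<Rightarrow> (nat \<Rightarrow> nat) \<Rightarrow> nat list \<Rightarrow> nat list" where
  "sym_perm k s j \<rho> xs = (if xs \<in> idx k s then xs[j := \<rho> (xs ! j)] else xs)"

definition iso_gens :: "nat \<Rightarrow> nat \<Rightarrow> (nat list \<Rightarrow> nat list) set" where
  "iso_gens k s = {coord_perm k s \<sigma> | \<sigma>. \<sigma> permutes {..<k}}
                \<union> {sym_perm k s j \<rho> | j \<rho>. j < k \<and> \<rho> permutes {..<s}}"

text \<open>Group generated (finite setting: closure of identity under composition with generators).\<close>
inductive_set G_iso :: "nat \<Rightarrow> nat \<Rightarrow> (nat list \<Rightarrow> nat list) set" for k s where
  iso_id: "id \<in> G_iso k s"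
| iso_step: "\<pi> \<in> G_iso k s \<Longrightarrow> g \<in> iso_gens k s \<Longrightarrow> g \<circ> \<pi> \<in> G_iso k s"

end

theory Submission
  imports Defs "HOL-Combinatorics.Cycles"
begin

text \<open>
  An isomorphism operation maps each constraint block, the set of words with prescribed symbols on
  a t-set of coordinates, onto another block, so it is a formulation symmetry; and permuting the
  variables compatibly with a permutation of the blocks preserves the LP feasible set and objective.

  Conversely, the intersection of all blocks containing two words p and q has at most s elements
  exactly when p and q are at Hamming distance at most one (this uses 1 \<le> t \<le> k - 1), so every
  formulation symmetry is an automorphism of the Hamming graph H(k, s). After composing with
  isomorphism operations, such an automorphism fixes the zero word and maps each coordinate axis
  into itself; it then agrees with a product of symbol permutations on all words with at most one
  nonzero coordinate, hence everywhere, because a word with two nonzero coordinates is the unique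
  common neighbour of its two zeroings other than the word with both zeroed.

  The order bound holds because the products of a coordinate permutation with symbol permutations
  are pairwise distinct.
\<close>

lemma finite_idx: "finite (idx k s)"
  unfolding idx_def using finite_lists_length_eq[of "{..<s}" k] by (simp add: conj_commute)

lemma mem_idx_iff: "xs \<in> idx k s \<longleftrightarrow> length xs = k \<and> (\<forall>j<k. xs ! j < s)"
  unfolding idx_def by (auto simp: in_set_conv_nth subset_iff)

lemma list_update_in_idx: "xs \<in> idx k s \<Longrightarrow> a < s \<Longrightarrow> xs[j := a] \<in> idx k s"
  by (cases "j < k") (auto simp: mem_idx_iff nth_list_update)

lemma axis_word_in_idx: "a < s \<Longrightarrow> (replicate k 0)[j := a] \<in> idx k s"
  by (rule list_update_in_idx) (auto simp: mem_idx_iff)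

lemma zero_word_in_idx: "0 < s \<Longrightarrow> replicate k 0 \<in> idx k s"
  by (simp add: mem_idx_iff)

lemma idx_eqI:
  assumes "xs \<in> idx k s" "ys \<in> idx k s" "\<And>j. j < k \<Longrightarrow> xs ! j = ys ! j"
  shows "xs = ys"
  using assms by (auto simp: mem_idx_iff intro: nth_equalityI)

lemma
  assumes "\<sigma> permutes {..<k}" "xs \<in> idx k s"
  shows coord_perm_in_idx: "coord_perm k s \<sigma> xs \<in> idx k s"
    and nth_coord_perm: "j < k \<Longrightarrow> coord_perm k s \<sigma> xs ! j = xs ! \<sigma> j"
  using assms permutes_in_image[OF assms(1)] by (auto simp: coord_perm_def mem_idx_iff)

lemma coord_perm_permutes:
  assumes \<sigma>: "\<sigma> permutes {..<k}"
  shows "coord_perm k s \<sigma> permutes idx k s"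
proof (rule inj_imp_permutes[OF _ finite_idx])
  show "inj_on (coord_perm k s \<sigma>) (idx k s)"
  proof (rule inj_onI)
    fix xs ys assume xs: "xs \<in> idx k s" and ys: "ys \<in> idx k s"
      and eq: "coord_perm k s \<sigma> xs = coord_perm k s \<sigma> ys"
    have "\<forall>j\<in>{..<k}. xs ! \<sigma> j = ys ! \<sigma> j"
      using eq nth_coord_perm[OF \<sigma> xs] nth_coord_perm[OF \<sigma> ys] by (metis lessThan_iff)
    then have "\<forall>m\<in>\<sigma> ` {..<k}. xs ! m = ys ! m" by blast
    then show "xs = ys" using xs ys by (intro idx_eqI) (auto simp: permutes_image[OF \<sigma>])
  qed
  show "\<And>xs. xs \<in> idx k s \<Longrightarrow> coord_perm k s \<sigma> xs \<in> idx k s" by (rule coord_perm_in_idx[OF \<sigma>])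
qed (simp add: coord_perm_def)

lemma
  assumes "j < k" "\<rho> permutes {..<s}" "xs \<in> idx k s"
  shows sym_perm_in_idx: "sym_perm k s j \<rho> xs \<in> idx k s"
    and nth_sym_perm: "m < k \<Longrightarrow> sym_perm k s j \<rho> xs ! m = (if m = j then \<rho> (xs ! j) else xs ! m)"
  using assms permutes_in_image[OF assms(2)] by (auto simp: sym_perm_def mem_idx_iff nth_list_update)

lemma sym_perm_permutes:
  assumes j: "j < k" and \<rho>: "\<rho> permutes {..<s}"
  shows "sym_perm k s j \<rho> permutes idx k s"
proof (rule inj_imp_permutes[OF _ finite_idx])
  show "inj_on (sym_perm k s j \<rho>) (idx k s)"
  proof (rule inj_onI)
    fix xs ys assume xs: "xs \<in> idx k s" and ys: "ys \<in> idx k s"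
      and eq: "sym_perm k s j \<rho> xs = sym_perm k s j \<rho> ys"
    have "xs ! m = ys ! m" if "m < k" for m
      using arg_cong[OF eq, of "\<lambda>zs. zs ! m"] nth_sym_perm[OF j \<rho> xs that] nth_sym_perm[OF j \<rho> ys that]
        permutes_inj[OF \<rho>] by (auto split: if_splits dest: injD)
    then show "xs = ys" using xs ys by (rule idx_eqI[rotated 2])
  qed
  show "\<And>xs. xs \<in> idx k s \<Longrightarrow> sym_perm k s j \<rho> xs \<in> idx k s" by (rule sym_perm_in_idx[OF j \<rho>])
qed (simp add: sym_perm_def)

lemma iso_gens_permutes: "g \<in> iso_gens k s \<Longrightarrow> g permutes idx k s"
  unfolding iso_gens_def using coord_perm_permutes sym_perm_permutes by blast

lemma G_iso_permutes: "\<pi> \<in> G_iso k s \<Longrightarrow> \<pi> permutes idx k s"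
  by (induction rule: G_iso.induct) (metis permutes_id, metis permutes_compose iso_gens_permutes)

lemma finite_G_iso: "finite (G_iso k s)"
  using finite_permutations[OF finite_idx] G_iso_permutes
  by (metis (mono_tags) mem_Collect_eq rev_finite_subset subsetI)

lemma iso_gens_in_G_iso: "g \<in> iso_gens k s \<Longrightarrow> g \<in> G_iso k s"
  using G_iso.iso_step[OF G_iso.iso_id] by simp

lemma G_iso_comp: "\<pi> \<in> G_iso k s \<Longrightarrow> \<pi>' \<in> G_iso k s \<Longrightarrow> \<pi> \<circ> \<pi>' \<in> G_iso k s"
  by (induction rule: G_iso.induct) (auto simp: o_assoc[symmetric] intro: G_iso.iso_step)

lemma G_iso_funpow: "\<pi> \<in> G_iso k s \<Longrightarrow> \<pi> ^^ n \<in> G_iso k s"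
  by (induction n) (auto intro: G_iso_comp G_iso.iso_id)

text \<open>Every element of the finite group has finite order, so its inverse is one of its powers.\<close>
lemma G_iso_inv:
  assumes "\<pi> \<in> G_iso k s"
  shows "inv \<pi> \<in> G_iso k s"
proof -
  have "permutation \<pi>"
    using G_iso_permutes[OF assms] finite_idx by (auto simp: permutation_permutes)
  then obtain n where n: "\<pi> ^^ n = id" "n > 0" by (rule permutation_is_nilpotent)
  have "inv \<pi> = \<pi> ^^ (n - 1)"
  proof (rule inv_unique_comp)
    show "\<pi> \<circ> \<pi> ^^ (n - 1) = id" using n by (metis Suc_diff_1 funpow.simps(2))
    show "\<pi> ^^ (n - 1) \<circ> \<pi> = id" using n by (metis Suc_diff_1 funpow_Suc_right)
  qed
  then show ?thesis using G_iso_funpow[OF assms] by simp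
qed

lemma G_iso_cancel_left:
  assumes "g \<in> G_iso k s" "g \<circ> \<pi> \<in> G_iso k s"
  shows "\<pi> \<in> G_iso k s"
proof -
  have "\<pi> = inv g \<circ> (g \<circ> \<pi>)"
    using permutes_inv_o(2)[OF G_iso_permutes[OF assms(1)]] by (simp add: o_assoc)
  then show ?thesis using G_iso_comp[OF G_iso_inv[OF assms(1)] assms(2)] by simp
qed

definition sym_perms :: "nat \<Rightarrow> nat \<Rightarrow> (nat \<Rightarrow> nat \<Rightarrow> nat) \<Rightarrow> nat \<Rightarrow> nat list \<Rightarrow> nat list" where
  "sym_perms k s \<rho> m xs =
     (if xs \<in> idx k s then map (\<lambda>j. if j < m then \<rho> j (xs ! j) else xs ! j) [0..<k] else xs)"

lemma
  assumes "\<forall>j<k. \<rho> j permutes {..<s}" "xs \<in> idx k s"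
  shows sym_perms_in_idx: "sym_perms k s \<rho> m xs \<in> idx k s"
    and nth_sym_perms: "j < k \<Longrightarrow> sym_perms k s \<rho> m xs ! j = (if j < m then \<rho> j (xs ! j) else xs ! j)"
  using assms permutes_in_image[of "\<rho> _" "{..<s}"] by (auto simp: sym_perms_def mem_idx_iff)

lemma sym_perms_in_G_iso:
  assumes \<rho>: "\<forall>j<k. \<rho> j permutes {..<s}" and "m \<le> k"
  shows "sym_perms k s \<rho> m \<in> G_iso k s"
  using assms(2)
proof (induction m)
  case 0
  have "sym_perms k s \<rho> 0 = id"
    by (auto simp: fun_eq_iff sym_perms_def mem_idx_iff map_nth)
  then show ?case using G_iso.iso_id by metis
next
  case (Suc m)
  then have m: "m < k" by simp
  have "sym_perms k s \<rho> (Suc m) xs = (sym_perm k s m (\<rho> m) \<circ> sym_perms k s \<rho> m) xs" for xs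
  proof (cases "xs \<in> idx k s")
    case True
    with m \<rho> show ?thesis
      by (auto intro!: idx_eqI[where k = k and s = s] simp: sym_perms_in_idx sym_perm_in_idx nth_sym_perms nth_sym_perm)
  qed (simp add: sym_perms_def sym_perm_def)
  moreover have "sym_perm k s m (\<rho> m) \<in> iso_gens k s" using m \<rho> by (auto simp: iso_gens_def)
  ultimately show ?case using G_iso.iso_step Suc by (metis fun_eq_iff m less_imp_le)
qed

lemma sym_perms_axis_word:
  assumes \<rho>: "\<forall>j<k. \<rho> j permutes {..<s}" and zero: "\<forall>j<k. \<rho> j 0 = 0" and "j < k" "a < s"
  shows "sym_perms k s \<rho> k ((replicate k 0)[j := a]) = (replicate k 0)[j := \<rho> j a]"
proof -
  have "(replicate k 0)[j := a] \<in> idx k s" "\<rho> j a < s"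
    using assms permutes_in_image[of "\<rho> j" "{..<s}" a] by (auto intro: axis_word_in_idx)
  then show ?thesis
    using assms by (intro idx_eqI[of _ k s])
      (auto simp: sym_perms_in_idx[OF \<rho>] axis_word_in_idx nth_sym_perms[OF \<rho>] nth_list_update)
qed

lemma nth_coord_perm_sym_perms:
  assumes \<sigma>: "\<sigma> permutes {..<k}" and \<rho>: "\<forall>j<k. \<rho> j permutes {..<s}"
    and xs: "xs \<in> idx k s" and j: "j < k"
  shows "coord_perm k s \<sigma> (sym_perms k s \<rho> k xs) ! j = \<rho> (\<sigma> j) (xs ! \<sigma> j)"
  using permutes_in_image[OF \<sigma>, of j] j
  by (simp add: nth_coord_perm[OF \<sigma> sym_perms_in_idx[OF \<rho> xs]] nth_sym_perms[OF \<rho> xs])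

lemma coord_perm_sym_perms_eqD:
  assumes s: "s \<ge> 2" and \<sigma>1: "\<sigma>1 permutes {..<k}" and \<sigma>2: "\<sigma>2 permutes {..<k}"
    and \<rho>1: "\<forall>j<k. \<rho>1 j permutes {..<s}" and \<rho>2: "\<forall>j<k. \<rho>2 j permutes {..<s}"
    and eq: "coord_perm k s \<sigma>1 \<circ> sym_perms k s \<rho>1 k = coord_perm k s \<sigma>2 \<circ> sym_perms k s \<rho>2 k"
  shows "\<sigma>1 = \<sigma>2" and "\<forall>m<k. \<rho>1 m = \<rho>2 m"
proof -
  have nth_eq: "\<rho>1 (\<sigma>1 j) (xs ! \<sigma>1 j) = \<rho>2 (\<sigma>2 j) (xs ! \<sigma>2 j)" if "xs \<in> idx k s" "j < k" for xs j
    using fun_cong[OF eq, of xs] nth_coord_perm_sym_perms[OF \<sigma>1 \<rho>1 that]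
      nth_coord_perm_sym_perms[OF \<sigma>2 \<rho>2 that] by simp
  have \<sigma>_eq: "\<sigma>1 j = \<sigma>2 j" if j: "j < k" for j
  proof (rule ccontr)
    assume ne: "\<sigma>1 j \<noteq> \<sigma>2 j"
    have m: "\<sigma>1 j < k" "\<sigma>2 j < k" using j permutes_in_image[OF \<sigma>1] permutes_in_image[OF \<sigma>2] by auto
    have "(replicate k 0)[\<sigma>1 j := 1] \<in> idx k s" "replicate k 0 \<in> idx k s"
      using s by (auto intro: axis_word_in_idx zero_word_in_idx)
    from nth_eq[OF this(1) j] nth_eq[OF this(2) j]
    have "\<rho>1 (\<sigma>1 j) 1 = \<rho>1 (\<sigma>1 j) 0" using m ne by (simp add: nth_list_update)
    then show False using permutes_inj[of "\<rho>1 (\<sigma>1 j)" "{..<s}"] \<rho>1 m by (auto dest: injD)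
  qed
  then show "\<sigma>1 = \<sigma>2" by (metis \<sigma>1 \<sigma>2 permutes_not_in lessThan_iff ext)
  show "\<forall>m<k. \<rho>1 m = \<rho>2 m"
  proof (intro allI impI ext)
    fix m a assume m: "m < k"
    show "\<rho>1 m a = \<rho>2 m a"
    proof (cases "a < s")
      case True
      define j where "j = inv \<sigma>1 m"
      have "j < k" "\<sigma>1 j = m"
        using m permutes_in_image[OF permutes_inv[OF \<sigma>1]] permutes_inverses(1)[OF \<sigma>1] by (auto simp: j_def)
      moreover have "(replicate k 0)[m := a] \<in> idx k s" using True by (rule axis_word_in_idx)
      ultimately show ?thesis
        using nth_eq[of "(replicate k 0)[m := a]" j] m \<sigma>_eq by (simp add: nth_list_update)
    next
      case False
      then show ?thesis using \<rho>1 \<rho>2 m by (metis lessThan_iff not_less permutes_not_in)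
    qed
  qed
qed

lemma inj_on_coord_perm_sym_perms:
  assumes s: "s \<ge> 2"
  shows "inj_on (\<lambda>(\<sigma>, \<rho>). coord_perm k s \<sigma> \<circ> sym_perms k s \<rho> k)
           ({\<sigma>. \<sigma> permutes {..<k}} \<times> ({..<k} \<rightarrow>\<^sub>E {\<rho>. \<rho> permutes {..<s}}))"
proof (rule inj_onI, clarsimp)
  fix \<sigma>1 \<rho>1 \<sigma>2 \<rho>2
  assume \<sigma>: "\<sigma>1 permutes {..<k}" "\<sigma>2 permutes {..<k}"
    and \<rho>: "\<rho>1 \<in> {..<k} \<rightarrow>\<^sub>E {\<rho>. \<rho> permutes {..<s}}" "\<rho>2 \<in> {..<k} \<rightarrow>\<^sub>E {\<rho>. \<rho> permutes {..<s}}"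
    and eq: "coord_perm k s \<sigma>1 \<circ> sym_perms k s \<rho>1 k = coord_perm k s \<sigma>2 \<circ> sym_perms k s \<rho>2 k"
  have "\<forall>j<k. \<rho>1 j permutes {..<s}" "\<forall>j<k. \<rho>2 j permutes {..<s}" using \<rho> by auto
  note params_eq = coord_perm_sym_perms_eqD[OF s \<sigma> this eq]
  have "\<rho>1 \<in> extensional {..<k}" "\<rho>2 \<in> extensional {..<k}" using \<rho> by (auto simp: PiE_def)
  then have "\<rho>1 = \<rho>2" by (rule extensionalityI) (use params_eq(2) in auto)
  then show "\<sigma>1 = \<sigma>2 \<and> \<rho>1 = \<rho>2" using params_eq(1) by simp
qed

lemma card_G_iso_ge:
  assumes "s \<ge> 2"
  shows "fact k * fact s ^ k \<le> card (G_iso k s)"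
proof -
  define P where "P = {\<sigma>. \<sigma> permutes {..<k}} \<times> ({..<k} \<rightarrow>\<^sub>E {\<rho>. \<rho> permutes {..<s}})"
  define \<Phi> where "\<Phi> = (\<lambda>(\<sigma>, \<rho>). coord_perm k s \<sigma> \<circ> sym_perms k s \<rho> k)"
  have "fact k * fact s ^ k = card P"
    by (simp add: P_def card_cartesian_product card_PiE card_permutations)
  also have "\<dots> = card (\<Phi> ` P)"
    using card_image[OF inj_on_coord_perm_sym_perms[OF assms, of k]] by (simp add: P_def \<Phi>_def)
  also have "\<dots> \<le> card (G_iso k s)"
  proof (rule card_mono[OF finite_G_iso], clarsimp simp: P_def \<Phi>_def)
    fix \<sigma> \<rho> assume "\<sigma> permutes {..<k}" "\<rho> \<in> {..<k} \<rightarrow>\<^sub>E {\<rho>. \<rho> permutes {..<s}}"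
    then have "coord_perm k s \<sigma> \<in> iso_gens k s" "\<forall>j<k. \<rho> j permutes {..<s}"
      by (auto simp: iso_gens_def)
    then show "coord_perm k s \<sigma> \<circ> sym_perms k s \<rho> k \<in> G_iso k s"
      by (blast intro: G_iso_comp iso_gens_in_G_iso sym_perms_in_G_iso)
  qed
  finally show ?thesis .
qed

definition in_block :: "nat set \<times> (nat \<Rightarrow> nat) \<Rightarrow> nat list \<Rightarrow> bool" where
  "in_block r i \<longleftrightarrow> (\<forall>j\<in>fst r. i ! j = snd r j)"

lemma oa_A_eq_iff: "oa_A r i = oa_A r' i' \<longleftrightarrow> (in_block r i \<longleftrightarrow> in_block r' i')"
proof -
  have "oa_A r i = (if in_block r i then 1 else 0)" for r i by (simp add: oa_A_def in_block_def)
  then show ?thesis by simp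
qed

lemma finite_oa_rowsA: "finite (oa_rowsA k s t)"
proof (rule finite_subset)
  show "oa_rowsA k s t \<subseteq> Sigma (Pow {..<k}) (\<lambda>J. J \<rightarrow>\<^sub>E {..<s})"
    by (auto simp: oa_rowsA_def)
  show "finite (Sigma (Pow {..<k}) (\<lambda>J. J \<rightarrow>\<^sub>E {..<s}))"
    by (intro finite_SigmaI finite_PiE) (auto intro: finite_subset)
qed

text \<open>The test word takes the values of the second row on its support and differs from the first
  row at a coordinate j of the first support; this needs a second symbol.\<close>
lemma oa_rowsA_extends_if_block_subset:
  assumes s: "s \<ge> 2" and r1: "(J1, a1) \<in> oa_rowsA k s t" and r2: "(J2, a2) \<in> oa_rowsA k s t"
    and sub: "\<And>i. i \<in> idx k s \<Longrightarrow> in_block (J2, a2) i \<Longrightarrow> in_block (J1, a1) i"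
  shows "J1 \<subseteq> J2" and "\<forall>j\<in>J1. a1 j = a2 j"
proof -
  have J1: "J1 \<subseteq> {..<k}" and J2: "J2 \<subseteq> {..<k}" "a2 \<in> J2 \<rightarrow>\<^sub>E {..<s}"
    using r1 r2 by (auto simp: oa_rowsA_def)
  have "j \<in> J2 \<and> a1 j = a2 j" if j: "j \<in> J1" for j
  proof -
    define u where "u = map (\<lambda>m. if m \<in> J2 then a2 m else if a1 j = 0 then 1 else 0) [0..<k]"
    have "u \<in> idx k s" using s J2 by (auto simp: mem_idx_iff u_def)
    moreover have "in_block (J2, a2) u" using J2 by (auto simp: in_block_def u_def)
    ultimately have "u ! j = a1 j" using sub j by (simp add: in_block_def)
    then show ?thesis using j J1 by (auto simp: u_def split: if_splits)
  qed
  then show "J1 \<subseteq> J2" and "\<forall>j\<in>J1. a1 j = a2 j" by auto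
qed

lemma oa_rowsA_eq_if_same_block:
  assumes s: "s \<ge> 2" and r1: "r1 \<in> oa_rowsA k s t" and r2: "r2 \<in> oa_rowsA k s t"
    and eq: "\<And>i. i \<in> idx k s \<Longrightarrow> in_block r1 i \<longleftrightarrow> in_block r2 i"
  shows "r1 = r2"
proof -
  obtain J1 a1 J2 a2 where r: "r1 = (J1, a1)" "r2 = (J2, a2)" by (cases r1, cases r2)
  have r1': "(J1, a1) \<in> oa_rowsA k s t" and r2': "(J2, a2) \<in> oa_rowsA k s t"
    using r1 r2 r by simp_all
  have "J1 \<subseteq> J2" "\<forall>j\<in>J1. a1 j = a2 j"
    using oa_rowsA_extends_if_block_subset[OF s r1' r2'] eq r by simp_all
  moreover have "J2 \<subseteq> J1"
    using oa_rowsA_extends_if_block_subset(1)[OF s r2' r1'] eq r by simp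
  moreover have "a1 \<in> extensional J1" "a2 \<in> extensional J2"
    using r1 r2 by (auto simp: oa_rowsA_def r PiE_def)
  ultimately show ?thesis
    unfolding r by (metis extensionalityI subset_antisym)
qed

lemma G_formE:
  assumes "\<pi> \<in> G_form k s t lam pmax"
  obtains \<sigma> where "\<pi> permutes idx k s" "\<sigma> permutes oa_rowsA k s t"
    "\<And>r i. r \<in> oa_rowsA k s t \<Longrightarrow> i \<in> idx k s \<Longrightarrow> in_block (\<sigma> r) (\<pi> i) \<longleftrightarrow> in_block r i"
  using assms unfolding G_form_def formulation_sym_def oa_A_eq_iff by blast

definition maps_blocks :: "nat \<Rightarrow> nat \<Rightarrow> nat \<Rightarrow> (nat list \<Rightarrow> nat list) \<Rightarrow> bool" where
  "maps_blocks k s t \<pi> \<longleftrightarrow>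
     (\<forall>r\<in>oa_rowsA k s t. \<exists>r'\<in>oa_rowsA k s t. \<forall>i\<in>idx k s. in_block r' (\<pi> i) \<longleftrightarrow> in_block r i)"

text \<open>The row permutation is forced, since distinct rows have distinct blocks; the inequality rows
  are permuted along with the variables.\<close>
lemma G_formI:
  assumes s: "s \<ge> 2" and \<pi>: "\<pi> permutes idx k s" and maps: "maps_blocks k s t \<pi>"
  shows "\<pi> \<in> G_form k s t lam pmax"
proof -
  define R where "R = oa_rowsA k s t"
  define f where "f r = (SOME r'. r' \<in> R \<and> (\<forall>i\<in>idx k s. in_block r' (\<pi> i) \<longleftrightarrow> in_block r i))" for r
  have f: "f r \<in> R \<and> (\<forall>i\<in>idx k s. in_block (f r) (\<pi> i) \<longleftrightarrow> in_block r i)" if "r \<in> R" for r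
  proof -
    have "\<exists>r'. r' \<in> R \<and> (\<forall>i\<in>idx k s. in_block r' (\<pi> i) \<longleftrightarrow> in_block r i)"
      using maps that unfolding maps_blocks_def R_def by blast
    then show ?thesis unfolding f_def by (rule someI_ex)
  qed
  define \<sigma> where "\<sigma> r = (if r \<in> R then f r else r)" for r
  have "inj_on \<sigma> R"
  proof (rule inj_onI)
    fix r1 r2 assume "r1 \<in> R" "r2 \<in> R" "\<sigma> r1 = \<sigma> r2"
    then show "r1 = r2"
      using f oa_rowsA_eq_if_same_block[OF s] by (simp add: \<sigma>_def R_def) metis
  qed
  then have \<sigma>_perm: "\<sigma> permutes R"
    using f by (intro inj_imp_permutes) (auto simp: \<sigma>_def R_def finite_oa_rowsA)
  define \<tau> where "\<tau> = (\<lambda>(i :: nat list, b :: bool). (\<pi> i, b))"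
  have "inj_on \<tau> (oa_rowsB k s)"
    using permutes_inj[OF \<pi>] by (auto intro!: inj_onI simp: \<tau>_def inj_eq)
  then have \<tau>_perm: "\<tau> permutes oa_rowsB k s"
    using \<pi> finite_idx
    by (intro inj_imp_permutes) (auto simp: \<tau>_def oa_rowsB_def permutes_in_image permutes_not_in)
  show ?thesis
    unfolding G_form_def formulation_sym_def
  proof (intro CollectI conjI \<pi>)
    show "\<forall>i\<in>idx k s. oa_c (\<pi> i) = oa_c i" by (simp add: oa_c_def)
    show "\<exists>\<sigma>. \<sigma> permutes oa_rowsA k s t \<and> (\<forall>r\<in>oa_rowsA k s t. oa_b lam (\<sigma> r) = oa_b lam r
            \<and> (\<forall>i\<in>idx k s. oa_A (\<sigma> r) (\<pi> i) = oa_A r i))"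
      using \<sigma>_perm f by (intro exI[of _ \<sigma>]) (simp add: R_def \<sigma>_def oa_b_def oa_A_eq_iff)
    show "\<exists>\<tau>. \<tau> permutes oa_rowsB k s \<and> (\<forall>r\<in>oa_rowsB k s. oa_d pmax (\<tau> r) = oa_d pmax r
            \<and> (\<forall>i\<in>idx k s. oa_B (\<tau> r) (\<pi> i) = oa_B r i))"
      using \<tau>_perm permutes_inj[OF \<pi>]
      by (intro exI[of _ \<tau>]) (auto simp: \<tau>_def oa_d_def oa_B_def inj_eq)
  qed
qed

lemma maps_blocks_id: "maps_blocks k s t id"
  by (auto simp: maps_blocks_def)

lemma maps_blocks_comp:
  assumes "maps_blocks k s t g" "maps_blocks k s t \<pi>" "\<pi> permutes idx k s"
  shows "maps_blocks k s t (g \<circ> \<pi>)"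
  unfolding maps_blocks_def
proof
  fix r assume "r \<in> oa_rowsA k s t"
  then obtain r1 where r1: "r1 \<in> oa_rowsA k s t" "\<forall>i\<in>idx k s. in_block r1 (\<pi> i) \<longleftrightarrow> in_block r i"
    using assms(2) by (auto simp: maps_blocks_def)
  then obtain r2 where r2: "r2 \<in> oa_rowsA k s t" "\<forall>i\<in>idx k s. in_block r2 (g i) \<longleftrightarrow> in_block r1 i"
    using assms(1) by (auto simp: maps_blocks_def)
  have "\<forall>i\<in>idx k s. in_block r2 ((g \<circ> \<pi>) i) \<longleftrightarrow> in_block r i"
    using r1(2) r2(2) permutes_in_image[OF assms(3)] by simp
  then show "\<exists>r'\<in>oa_rowsA k s t. \<forall>i\<in>idx k s. in_block r' ((g \<circ> \<pi>) i) \<longleftrightarrow> in_block r i"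
    using r2(1) by blast
qed

lemma coord_perm_maps_blocks:
  assumes \<sigma>: "\<sigma> permutes {..<k}"
  shows "maps_blocks k s t (coord_perm k s \<sigma>)"
  unfolding maps_blocks_def
proof (intro ballI, clarify)
  fix J a assume "(J, a) \<in> oa_rowsA k s t"
  then have J: "J \<subseteq> {..<k}" "card J = t" "a \<in> J \<rightarrow>\<^sub>E {..<s}" by (auto simp: oa_rowsA_def)
  define J' where "J' = inv \<sigma> ` J"
  have \<sigma>J': "\<sigma> ` J' = J"
    by (simp add: J'_def image_comp permutes_inv_o(1)[OF \<sigma>])
  have J'_mem: "j \<in> J' \<longleftrightarrow> \<sigma> j \<in> J" for j
    using inj_image_mem_iff[OF permutes_inj[OF \<sigma>], of j J'] \<sigma>J' by simp
  have J'k: "J' \<subseteq> {..<k}"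
    using J(1) permutes_in_image[OF permutes_inv[OF \<sigma>]] by (auto simp: J'_def)
  moreover have "card J' = t"
    using J(2) card_image[OF permutes_inj_on[OF permutes_inv[OF \<sigma>]]] by (simp add: J'_def)
  moreover have "restrict (a \<circ> \<sigma>) J' \<in> J' \<rightarrow>\<^sub>E {..<s}"
    using J(3) J'_mem by (auto simp: PiE_iff)
  ultimately have "(J', restrict (a \<circ> \<sigma>) J') \<in> oa_rowsA k s t" by (simp add: oa_rowsA_def)
  moreover have "in_block (J', restrict (a \<circ> \<sigma>) J') (coord_perm k s \<sigma> i) \<longleftrightarrow> in_block (J, a) i"
    if i: "i \<in> idx k s" for i
  proof -
    have "\<forall>j\<in>J'. coord_perm k s \<sigma> i ! j = i ! \<sigma> j" using nth_coord_perm[OF \<sigma> i] J'k by blast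
    then have "in_block (J', restrict (a \<circ> \<sigma>) J') (coord_perm k s \<sigma> i) \<longleftrightarrow> (\<forall>j\<in>J'. i ! \<sigma> j = a (\<sigma> j))"
      by (simp add: in_block_def)
    also have "\<dots> \<longleftrightarrow> (\<forall>m\<in>\<sigma> ` J'. i ! m = a m)" by simp
    finally show ?thesis by (simp add: \<sigma>J' in_block_def)
  qed
  ultimately show "\<exists>r'\<in>oa_rowsA k s t.
      \<forall>i\<in>idx k s. in_block r' (coord_perm k s \<sigma> i) \<longleftrightarrow> in_block (J, a) i"
    by blast
qed

lemma sym_perm_maps_blocks:
  assumes j: "j < k" and \<rho>: "\<rho> permutes {..<s}"
  shows "maps_blocks k s t (sym_perm k s j \<rho>)"
  unfolding maps_blocks_def
proof (intro ballI, clarify)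
  fix J a assume r: "(J, a) \<in> oa_rowsA k s t"
  then have J: "J \<subseteq> {..<k}" "a \<in> J \<rightarrow>\<^sub>E {..<s}" by (auto simp: oa_rowsA_def)
  define a' where "a' = (if j \<in> J then a(j := \<rho> (a j)) else a)"
  have "a' \<in> J \<rightarrow>\<^sub>E {..<s}"
    using J(2) permutes_in_image[OF \<rho>] by (auto simp: a'_def PiE_iff extensional_def)
  then have "(J, a') \<in> oa_rowsA k s t" using r by (simp add: oa_rowsA_def)
  moreover have "in_block (J, a') (sym_perm k s j \<rho> i) \<longleftrightarrow> in_block (J, a) i" if i: "i \<in> idx k s" for i
  proof -
    have "sym_perm k s j \<rho> i ! m = a' m \<longleftrightarrow> i ! m = a m" if "m \<in> J" for m
      using that J(1) nth_sym_perm[OF j \<rho> i, of m] permutes_inj[OF \<rho>]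
      by (auto simp: a'_def inj_eq)
    then show ?thesis by (simp add: in_block_def)
  qed
  ultimately show "\<exists>r'\<in>oa_rowsA k s t.
      \<forall>i\<in>idx k s. in_block r' (sym_perm k s j \<rho> i) \<longleftrightarrow> in_block (J, a) i"
    by blast
qed

lemma G_iso_maps_blocks:
  assumes "\<pi> \<in> G_iso k s"
  shows "maps_blocks k s t \<pi>"
  using assms
proof (induction rule: G_iso.induct)
  case iso_id
  show ?case by (rule maps_blocks_id)
next
  case (iso_step \<pi> g)
  have "maps_blocks k s t g"
    using iso_step.hyps(2) coord_perm_maps_blocks sym_perm_maps_blocks by (auto simp: iso_gens_def)
  then show ?case
    using maps_blocks_comp iso_step.IH G_iso_permutes[OF iso_step.hyps(1)] by blast
qed

lemma G_iso_subset_G_form: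
  assumes "s \<ge> 2"
  shows "G_iso k s \<subseteq> G_form k s t lam pmax"
proof
  fix \<pi> assume "\<pi> \<in> G_iso k s"
  then show "\<pi> \<in> G_form k s t lam pmax"
    using G_formI[OF assms G_iso_permutes G_iso_maps_blocks] by blast
qed

lemma G_form_image_block:
  assumes "\<pi> \<in> G_form k s t lam pmax"
  obtains \<sigma> where "\<sigma> permutes oa_rowsA k s t"
    "\<And>r. r \<in> oa_rowsA k s t \<Longrightarrow> \<pi> ` {i \<in> idx k s. in_block r i} = {i \<in> idx k s. in_block (\<sigma> r) i}"
proof -
  obtain \<sigma> where \<pi>: "\<pi> permutes idx k s" and \<sigma>: "\<sigma> permutes oa_rowsA k s t"
    and blocks: "\<And>r i. r \<in> oa_rowsA k s t \<Longrightarrow> i \<in> idx k s \<Longrightarrow> in_block (\<sigma> r) (\<pi> i) \<longleftrightarrow> in_block r i"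
    using assms by (rule G_formE) blast
  have "\<pi> ` {i \<in> idx k s. in_block r i} = {i \<in> idx k s. in_block (\<sigma> r) i}"
    if r: "r \<in> oa_rowsA k s t" for r
  proof (intro equalityI subsetI)
    fix j assume "j \<in> \<pi> ` {i \<in> idx k s. in_block r i}"
    then show "j \<in> {i \<in> idx k s. in_block (\<sigma> r) i}"
      using blocks[OF r] permutes_in_image[OF \<pi>] by auto
  next
    fix j assume j: "j \<in> {i \<in> idx k s. in_block (\<sigma> r) i}"
    then have "inv \<pi> j \<in> idx k s" and \<pi>_inv: "\<pi> (inv \<pi> j) = j"
      using permutes_in_image[OF permutes_inv[OF \<pi>]] permutes_inverses(1)[OF \<pi>] by auto
    with j have "inv \<pi> j \<in> {i \<in> idx k s. in_block r i}"
      using blocks[OF r] by force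
    then show "j \<in> \<pi> ` {i \<in> idx k s. in_block r i}"
      using \<pi>_inv by (rule rev_image_eqI[OF _ sym])
  qed
  then show thesis using \<sigma> that by blast
qed

lemma sum_perm_vars_image:
  assumes "\<pi> permutes S"
  shows "(\<Sum>i\<in>\<pi> ` B. perm_vars \<pi> x i) = (\<Sum>i\<in>B. x i)"
  using sum.reindex[OF inj_on_subset[OF permutes_inj[OF assms] subset_UNIV], of "perm_vars \<pi> x" B]
  by (simp add: perm_vars_def permutes_inverses(2)[OF assms])

lemma mem_oa_LP_feasible_iff:
  "x \<in> oa_LP_feasible k s t lam pmax \<longleftrightarrow>
     (\<forall>i. i \<notin> idx k s \<longrightarrow> x i = 0)
     \<and> (\<forall>r\<in>oa_rowsA k s t. (\<Sum>i\<in>{i \<in> idx k s. in_block r i}. x i) = real lam)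
     \<and> (\<forall>i\<in>idx k s. 0 \<le> x i \<and> x i \<le> real pmax)"
  by (auto simp: oa_LP_feasible_def oa_rowsA_def in_block_def)

lemma G_form_subset_G_LP: "G_form k s t lam pmax \<subseteq> G_LP k s t lam pmax"
proof
  fix \<pi> assume G_form: "\<pi> \<in> G_form k s t lam pmax"
  then have \<pi>: "\<pi> permutes idx k s" by (rule G_formE)
  obtain \<sigma> where \<sigma>: "\<sigma> permutes oa_rowsA k s t"
    and img: "\<And>r. r \<in> oa_rowsA k s t \<Longrightarrow> \<pi> ` {i \<in> idx k s. in_block r i} = {i \<in> idx k s. in_block (\<sigma> r) i}"
    using G_form by (rule G_form_image_block) blast
  have "perm_vars \<pi> x \<in> oa_LP_feasible k s t lam pmax" if x: "x \<in> oa_LP_feasible k s t lam pmax" for x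
    unfolding mem_oa_LP_feasible_iff
  proof (intro conjI allI impI ballI)
    fix i assume "i \<notin> idx k s"
    then show "perm_vars \<pi> x i = 0"
      using x permutes_not_in[OF permutes_inv[OF \<pi>]] by (simp add: mem_oa_LP_feasible_iff perm_vars_def)
  next
    fix r assume r: "r \<in> oa_rowsA k s t"
    have r': "inv \<sigma> r \<in> oa_rowsA k s t" and "\<sigma> (inv \<sigma> r) = r"
      using r permutes_in_image[OF permutes_inv[OF \<sigma>]] permutes_inverses(1)[OF \<sigma>] by auto
    then have "(\<Sum>i\<in>{i \<in> idx k s. in_block r i}. perm_vars \<pi> x i)
        = (\<Sum>i\<in>\<pi> ` {i \<in> idx k s. in_block (inv \<sigma> r) i}. perm_vars \<pi> x i)"
      using img by simp
    also have "\<dots> = (\<Sum>i\<in>{i \<in> idx k s. in_block (inv \<sigma> r) i}. x i)"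
      by (rule sum_perm_vars_image[OF \<pi>])
    also have "\<dots> = real lam"
      using x r' by (simp add: mem_oa_LP_feasible_iff)
    finally show "(\<Sum>i\<in>{i \<in> idx k s. in_block r i}. perm_vars \<pi> x i) = real lam" .
  next
    fix i assume "i \<in> idx k s"
    then show "0 \<le> perm_vars \<pi> x i" "perm_vars \<pi> x i \<le> real pmax"
      using x permutes_in_image[OF permutes_inv[OF \<pi>]] by (simp_all add: mem_oa_LP_feasible_iff perm_vars_def)
  qed
  moreover have "(\<Sum>i\<in>idx k s. perm_vars \<pi> x i) = (\<Sum>i\<in>idx k s. x i)" for x
    using sum_perm_vars_image[OF \<pi>, of x "idx k s"] by (simp add: permutes_image[OF \<pi>])
  ultimately show "\<pi> \<in> G_LP k s t lam pmax"
    using \<pi> by (simp add: G_LP_def)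
qed

text \<open>Hamming distance at most one; in particular reflexive when k > 0.\<close>
definition hamming_adj :: "nat \<Rightarrow> nat list \<Rightarrow> nat list \<Rightarrow> bool" where
  "hamming_adj k p q \<longleftrightarrow> (\<exists>j<k. \<forall>m<k. m \<noteq> j \<longrightarrow> p ! m = q ! m)"

lemma hamming_adj_sym: "hamming_adj k p q \<Longrightarrow> hamming_adj k q p"
  unfolding hamming_adj_def by metis

lemma hamming_adj_update: "j < k \<Longrightarrow> hamming_adj k (p[j := a]) (p[j := b])"
  unfolding hamming_adj_def by (auto simp: nth_list_update)

lemma hamming_adj_update_self: "j < k \<Longrightarrow> hamming_adj k (p[j := a]) p"
  using hamming_adj_update[of j k p a "p ! j"] by simp

definition block_closure :: "nat \<Rightarrow> nat \<Rightarrow> nat \<Rightarrow> nat list \<Rightarrow> nat list \<Rightarrow> nat list set" where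
  "block_closure k s t p q =
     {u \<in> idx k s. \<forall>r\<in>oa_rowsA k s t. in_block r p \<and> in_block r q \<longrightarrow> in_block r u}"

lemma finite_block_closure: "finite (block_closure k s t p q)"
  using finite_idx by (rule finite_subset[rotated]) (auto simp: block_closure_def)

lemma row_through_avoiding:
  assumes t: "1 \<le> t" "t \<le> k - 1" and p: "p \<in> idx k s" and "m < k" "j < k" "m \<noteq> j"
  obtains J where "(J, restrict ((!) p) J) \<in> oa_rowsA k s t" "m \<in> J" "j \<notin> J"
proof -
  have "card ({..<k} - {j, m}) = k - 2" using assms by (simp add: card_Diff_subset)
  then have "t - 1 \<le> card ({..<k} - {j, m})" using t by simp
  then obtain T where T: "T \<subseteq> {..<k} - {j, m}" "card T = t - 1" "finite T"
    by (rule obtain_subset_with_card_n)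
  have "m \<notin> T" using T(1) by auto
  then have "card (insert m T) = t" using T(2,3) t by simp
  moreover have "insert m T \<subseteq> {..<k}" "j \<notin> insert m T"
    using T(1) assms by auto
  moreover have "restrict ((!) p) (insert m T) \<in> insert m T \<rightarrow>\<^sub>E {..<s}"
    using p \<open>insert m T \<subseteq> {..<k}\<close> by (auto simp: mem_idx_iff)
  ultimately show thesis
    using that[of "insert m T"] by (simp add: oa_rowsA_def)
qed

lemma card_block_closure_le_if_adj:
  assumes t: "1 \<le> t" "t \<le> k - 1" and p: "p \<in> idx k s" and adj: "hamming_adj k p q"
  shows "card (block_closure k s t p q) \<le> s"
proof -
  obtain j where j: "j < k" "\<And>m. m < k \<Longrightarrow> m \<noteq> j \<Longrightarrow> p ! m = q ! m"
    using adj by (auto simp: hamming_adj_def)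
  have "u \<in> (\<lambda>a. p[j := a]) ` {..<s}" if u: "u \<in> block_closure k s t p q" for u
  proof -
    have u_idx: "u \<in> idx k s" using u by (simp add: block_closure_def)
    have "u ! m = p ! m" if m: "m < k" "m \<noteq> j" for m
    proof -
      obtain J where r: "(J, restrict ((!) p) J) \<in> oa_rowsA k s t" "m \<in> J" "j \<notin> J"
        using row_through_avoiding[OF t p m(1) j(1) m(2)] .
      then have "J \<subseteq> {..<k}" by (simp add: oa_rowsA_def)
      then have "q ! i = p ! i" if "i \<in> J" for i
        using that j(2)[of i] r(3) \<open>J \<subseteq> {..<k}\<close> by (metis lessThan_iff subsetD)
      then have "in_block (J, restrict ((!) p) J) p" "in_block (J, restrict ((!) p) J) q"
        by (auto simp: in_block_def)
      then have "in_block (J, restrict ((!) p) J) u"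
        using u r(1) by (simp add: block_closure_def)
      then show ?thesis using r(2) by (simp add: in_block_def)
    qed
    then have "u = p[j := u ! j]"
      using u_idx p j(1) by (intro idx_eqI[of _ k s]) (auto simp: mem_idx_iff nth_list_update)
    moreover have "u ! j < s" using u_idx j(1) by (simp add: mem_idx_iff)
    ultimately show ?thesis by blast
  qed
  then have "card (block_closure k s t p q) \<le> card ((\<lambda>a. p[j := a]) ` {..<s})"
    by (intro card_mono) auto
  also have "\<dots> \<le> s" using card_image_le[of "{..<s}" "\<lambda>a. p[j := a]"] by simp
  finally show ?thesis .
qed

text \<open>If p and q differ at two coordinates, no block through both constrains these coordinates.\<close>
lemma card_block_closure_gt_if_not_adj:
  assumes s: "s \<ge> 2" and k: "0 < k" and p: "p \<in> idx k s" and nadj: "\<not> hamming_adj k p q"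
  shows "s < card (block_closure k s t p q)"
proof -
  obtain j1 where j1: "j1 < k" "p ! j1 \<noteq> q ! j1" using nadj k by (auto simp: hamming_adj_def)
  obtain j2 where j2: "j2 < k" "j2 \<noteq> j1" "p ! j2 \<noteq> q ! j2" using nadj j1 by (auto simp: hamming_adj_def)
  define h where "h = (\<lambda>(a, b). p[j1 := a, j2 := b])"
  have h_nth: "h (a, b) ! m = (if m = j2 then b else if m = j1 then a else p ! m)" if "m < k" for a b m
    using that p j1 j2 by (simp add: h_def nth_list_update mem_idx_iff)
  have sub: "h ` ({..<s} \<times> {..<s}) \<subseteq> block_closure k s t p q"
  proof clarify
    fix a b assume ab: "a < s" "b < s"
    have "h (a, b) \<in> idx k s"
      using p ab by (auto simp: mem_idx_iff h_nth) (simp add: h_def)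
    moreover have "in_block r (h (a, b))" if r: "r \<in> oa_rowsA k s t" "in_block r p" "in_block r q" for r
    proof -
      have "fst r \<subseteq> {..<k}" "j1 \<notin> fst r" "j2 \<notin> fst r"
        using r j1 j2 by (auto simp: oa_rowsA_def in_block_def)
      then show ?thesis using r(2) by (auto simp: in_block_def h_nth)
    qed
    ultimately show "h (a, b) \<in> block_closure k s t p q" by (simp add: block_closure_def)
  qed
  have inj: "inj_on h ({..<s} \<times> {..<s})"
  proof (rule inj_onI, clarify)
    fix a b a' b' assume "h (a, b) = h (a', b')"
    then have "h (a, b) ! j1 = h (a', b') ! j1" "h (a, b) ! j2 = h (a', b') ! j2" by simp_all
    then show "a = a' \<and> b = b'"
      using h_nth j1 j2 by simp
  qed
  have "s * s = card (h ` ({..<s} \<times> {..<s}))"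
    using card_image[OF inj] by (simp add: card_cartesian_product)
  also have "\<dots> \<le> card (block_closure k s t p q)"
    using card_mono[OF finite_block_closure sub] .
  finally have "s * s \<le> card (block_closure k s t p q)" .
  moreover have "s < s * s" using s mult_less_mono2[of 1 s s] by simp
  ultimately show ?thesis by linarith
qed

lemma hamming_adj_iff_card_block_closure:
  assumes "s \<ge> 2" "1 \<le> t" "t \<le> k - 1" "p \<in> idx k s"
  shows "hamming_adj k p q \<longleftrightarrow> card (block_closure k s t p q) \<le> s"
proof
  assume "hamming_adj k p q"
  then show "card (block_closure k s t p q) \<le> s"
    using card_block_closure_le_if_adj assms(2-4) by blast
next
  have "0 < k" using assms(2,3) by simp
  then show "card (block_closure k s t p q) \<le> s \<Longrightarrow> hamming_adj k p q"
    using card_block_closure_gt_if_not_adj[OF assms(1) _ assms(4)] by (meson not_le)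
qed

lemma G_form_image_block_closure:
  assumes G_form: "\<pi> \<in> G_form k s t lam pmax" and p: "p \<in> idx k s" and q: "q \<in> idx k s"
  shows "\<pi> ` block_closure k s t p q = block_closure k s t (\<pi> p) (\<pi> q)"
proof -
  obtain \<sigma> where \<pi>: "\<pi> permutes idx k s" and \<sigma>: "\<sigma> permutes oa_rowsA k s t"
    and blocks: "\<And>r i. r \<in> oa_rowsA k s t \<Longrightarrow> i \<in> idx k s \<Longrightarrow> in_block (\<sigma> r) (\<pi> i) \<longleftrightarrow> in_block r i"
    using G_form by (rule G_formE) blast
  have all_rows: "(\<forall>r\<in>oa_rowsA k s t. P r) \<longleftrightarrow> (\<forall>r\<in>oa_rowsA k s t. P (\<sigma> r))" for P
  proof -
    have "(\<forall>r\<in>\<sigma> ` oa_rowsA k s t. P r) \<longleftrightarrow> (\<forall>r\<in>oa_rowsA k s t. P (\<sigma> r))" by simp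
    then show ?thesis by (simp only: permutes_image[OF \<sigma>])
  qed
  have closure_iff: "\<pi> u \<in> block_closure k s t (\<pi> p) (\<pi> q) \<longleftrightarrow> u \<in> block_closure k s t p q"
    if u: "u \<in> idx k s" for u
    using u blocks p q permutes_in_image[OF \<pi>]
    by (simp add: block_closure_def all_rows[of "\<lambda>r. in_block r (\<pi> p) \<and> in_block r (\<pi> q) \<longrightarrow> in_block r (\<pi> u)"])
  show ?thesis
  proof (intro equalityI subsetI)
    fix v assume "v \<in> \<pi> ` block_closure k s t p q"
    then show "v \<in> block_closure k s t (\<pi> p) (\<pi> q)"
      using closure_iff by (auto simp: block_closure_def)
  next
    fix v assume v: "v \<in> block_closure k s t (\<pi> p) (\<pi> q)"
    then have "inv \<pi> v \<in> idx k s" and \<pi>_inv: "\<pi> (inv \<pi> v) = v"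
      using permutes_in_image[OF permutes_inv[OF \<pi>]] permutes_inverses(1)[OF \<pi>]
      by (auto simp: block_closure_def)
    then have "inv \<pi> v \<in> block_closure k s t p q" using closure_iff[of "inv \<pi> v"] v by simp
    then show "v \<in> \<pi> ` block_closure k s t p q" using \<pi>_inv by (rule rev_image_eqI[OF _ sym])
  qed
qed

lemma G_form_preserves_hamming_adj:
  assumes "s \<ge> 2" "1 \<le> t" "t \<le> k - 1"
    and G_form: "\<pi> \<in> G_form k s t lam pmax" and p: "p \<in> idx k s" and q: "q \<in> idx k s"
  shows "hamming_adj k (\<pi> p) (\<pi> q) \<longleftrightarrow> hamming_adj k p q"
proof -
  have \<pi>: "\<pi> permutes idx k s" using G_form by (rule G_formE)
  have "card (block_closure k s t (\<pi> p) (\<pi> q)) = card (block_closure k s t p q)"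
    using G_form_image_block_closure[OF G_form p q] card_image[OF permutes_inj_on[OF \<pi>]] by metis
  then show ?thesis
    using hamming_adj_iff_card_block_closure[OF assms(1-3)] p permutes_in_image[OF \<pi>] by simp
qed

lemma axis_words_not_adj:
  assumes "i < k" "j < k" "hamming_adj k ((replicate k 0)[i := 1]) ((replicate k 0)[j := 1])"
  shows "i = j"
  using assms unfolding hamming_adj_def by (metis nth_list_update nth_replicate length_replicate zero_neq_one)

lemma on_axis_if_adj_zero:
  assumes "hamming_adj k (replicate k 0) w" "j < k" "w ! j \<noteq> 0" "m < k" "m \<noteq> j"
  shows "w ! m = 0"
  using assms unfolding hamming_adj_def by (metis nth_replicate)

lemma on_axis_if_adj_zero_and_axis_word:
  assumes "hamming_adj k (replicate k 0) p" "hamming_adj k w p" "j < k" "w ! j \<noteq> 0"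
    and w_axis: "\<And>m. m < k \<Longrightarrow> m \<noteq> j \<Longrightarrow> w ! m = 0" and "m < k" "m \<noteq> j"
  shows "p ! m = 0"
proof -
  obtain \<alpha> where \<alpha>: "\<And>m. m < k \<Longrightarrow> m \<noteq> \<alpha> \<Longrightarrow> p ! m = 0"
    using assms(1) by (auto simp: hamming_adj_def)
  obtain \<beta> where \<beta>: "\<And>m. m < k \<Longrightarrow> m \<noteq> \<beta> \<Longrightarrow> w ! m = p ! m"
    using assms(2) by (auto simp: hamming_adj_def)
  show ?thesis
  proof (cases "\<alpha> = j")
    case False
    then have "p ! j = 0" using \<alpha> assms(3) by simp
    then have "\<beta> = j" using \<beta>[of j] assms(3,4) by auto
    then show ?thesis using \<beta> w_axis assms(6,7) by metis
  qed (use \<alpha> assms(6,7) in simp)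
qed

lemma common_neighbour_of_two_zeroings:
  assumes "p \<in> idx k s" "x \<in> idx k s" "j1 < k" "j2 < k" "j1 \<noteq> j2" "x ! j1 \<noteq> 0" "x ! j2 \<noteq> 0"
    and adj1: "hamming_adj k p (x[j1 := 0])" and adj2: "hamming_adj k p (x[j2 := 0])"
  shows "p = x \<or> p = x[j1 := 0, j2 := 0]"
proof -
  obtain \<alpha> where \<alpha>: "\<And>m. m < k \<Longrightarrow> m \<noteq> \<alpha> \<Longrightarrow> p ! m = x[j1 := 0] ! m"
    using adj1 by (auto simp: hamming_adj_def)
  obtain \<beta> where \<beta>: "\<And>m. m < k \<Longrightarrow> m \<noteq> \<beta> \<Longrightarrow> p ! m = x[j2 := 0] ! m"
    using adj2 by (auto simp: hamming_adj_def)
  have len: "length x = k" using assms(2) by (simp add: mem_idx_iff)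
  have "j1 = \<alpha> \<or> j1 = \<beta>"
    using \<alpha>[of j1] \<beta>[of j1] assms(3-6) len by (metis nth_list_update_eq nth_list_update_neq)
  moreover have "j2 = \<alpha> \<or> j2 = \<beta>"
    using \<alpha>[of j2] \<beta>[of j2] assms(3-5,7) len by (metis nth_list_update_eq nth_list_update_neq)
  ultimately
  consider "\<alpha> = j1" "\<beta> = j2" | "\<alpha> = j2" "\<beta> = j1" using assms(5) by blast
  then show ?thesis
  proof cases
    case 1
    then have "p = x"
      using \<alpha> \<beta>[of j1] assms len by (intro idx_eqI[of _ k s]) (auto simp: nth_list_update)
    then show ?thesis ..
  next
    case 2
    then have "p = x[j1 := 0, j2 := 0]"
      using \<alpha> \<beta>[of j2] assms len
      by (intro idx_eqI[of _ k s]) (auto simp: nth_list_update mem_idx_iff)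
    then show ?thesis ..
  qed
qed

definition hamming_aut :: "nat \<Rightarrow> nat \<Rightarrow> (nat list \<Rightarrow> nat list) \<Rightarrow> bool" where
  "hamming_aut k s \<pi> \<longleftrightarrow> \<pi> permutes idx k s \<and>
     (\<forall>p\<in>idx k s. \<forall>q\<in>idx k s. hamming_adj k (\<pi> p) (\<pi> q) \<longleftrightarrow> hamming_adj k p q)"

lemma hamming_aut_comp: "hamming_aut k s g \<Longrightarrow> hamming_aut k s \<pi> \<Longrightarrow> hamming_aut k s (g \<circ> \<pi>)"
  unfolding hamming_aut_def by (auto intro: permutes_compose simp: permutes_in_image)

lemma hamming_aut_inv:
  assumes "hamming_aut k s \<pi>"
  shows "hamming_aut k s (inv \<pi>)"
proof -
  have \<pi>: "\<pi> permutes idx k s" using assms by (simp add: hamming_aut_def)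
  have "hamming_adj k (inv \<pi> p) (inv \<pi> q) \<longleftrightarrow> hamming_adj k p q" if "p \<in> idx k s" "q \<in> idx k s" for p q
  proof -
    have "inv \<pi> p \<in> idx k s" "inv \<pi> q \<in> idx k s"
      using that permutes_in_image[OF permutes_inv[OF \<pi>]] by auto
    then have "hamming_adj k (\<pi> (inv \<pi> p)) (\<pi> (inv \<pi> q)) \<longleftrightarrow> hamming_adj k (inv \<pi> p) (inv \<pi> q)"
      using assms by (simp add: hamming_aut_def)
    then show ?thesis by (simp add: permutes_inverses(1)[OF \<pi>])
  qed
  then show ?thesis using permutes_inv[OF \<pi>] by (simp add: hamming_aut_def)
qed

lemma G_form_hamming_aut:
  assumes "s \<ge> 2" "1 \<le> t" "t \<le> k - 1" "\<pi> \<in> G_form k s t lam pmax"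
  shows "hamming_aut k s \<pi>"
proof -
  have "\<pi> permutes idx k s" using assms(4) by (rule G_formE)
  then show ?thesis using G_form_preserves_hamming_adj[OF assms] by (simp add: hamming_aut_def)
qed

text \<open>The constraint blocks for t = 1 already determine Hamming adjacency.\<close>
lemma G_iso_hamming_aut:
  assumes "s \<ge> 2" "k \<ge> 2" "\<pi> \<in> G_iso k s"
  shows "hamming_aut k s \<pi>"
proof -
  have "\<pi> \<in> G_form k s 1 0 0" using G_iso_subset_G_form[OF assms(1)] assms(3) by blast
  then show ?thesis using assms(1,2) by (intro G_form_hamming_aut) auto
qed

definition nonzero_coords :: "nat \<Rightarrow> nat list \<Rightarrow> nat set" where
  "nonzero_coords k x = {j. j < k \<and> x ! j \<noteq> 0}"

lemma finite_nonzero_coords: "finite (nonzero_coords k x)"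
  by (simp add: nonzero_coords_def)

lemma nonzero_coords_update_zero:
  "length x = k \<Longrightarrow> nonzero_coords k (x[j := 0]) = nonzero_coords k x - {j}"
  by (cases "j < k") (auto simp: nonzero_coords_def nth_list_update)

lemma axis_word_if_card_nonzero_coords_le_1:
  assumes x: "x \<in> idx k s" and k: "0 < k" and card: "card (nonzero_coords k x) \<le> 1"
  obtains j where "j < k" "x = (replicate k 0)[j := x ! j]"
proof -
  obtain j where j: "j < k" "\<And>m. m < k \<Longrightarrow> m \<noteq> j \<Longrightarrow> x ! m = 0"
  proof (cases "\<exists>j<k. x ! j \<noteq> 0")
    case True
    then obtain j where j: "j < k" "x ! j \<noteq> 0" by blast
    have "x ! m = 0" if "m < k" "m \<noteq> j" for m
      using card card_le_Suc0_iff_eq[OF finite_nonzero_coords] that j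
      by (auto simp: nonzero_coords_def)
    with j(1) show thesis by (rule that)
  next
    case False
    with k show thesis using that[of 0] by blast
  qed
  have "x = (replicate k 0)[j := x ! j]"
    using x j by (intro idx_eqI[of _ k s]) (auto simp: mem_idx_iff nth_list_update)
  with j(1) show thesis by (rule that)
qed

lemma hamming_aut_fixes_if_fixes_zeroings:
  assumes \<pi>: "hamming_aut k s \<pi>" and x: "x \<in> idx k s"
    and j1: "j1 \<in> nonzero_coords k x" and j2: "j2 \<in> nonzero_coords k x" and "j1 \<noteq> j2"
    and fixed: "\<pi> (x[j1 := 0]) = x[j1 := 0]" "\<pi> (x[j2 := 0]) = x[j2 := 0]"
      "\<pi> (x[j1 := 0, j2 := 0]) = x[j1 := 0, j2 := 0]"
  shows "\<pi> x = x"
proof -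
  have \<pi>_perm: "\<pi> permutes idx k s" using \<pi> by (simp add: hamming_aut_def)
  have j: "j1 < k" "x ! j1 \<noteq> 0" "j2 < k" "x ! j2 \<noteq> 0" using j1 j2 by (auto simp: nonzero_coords_def)
  then have "0 < s" using x by (auto simp: mem_idx_iff)
  have adj: "hamming_adj k (\<pi> x) (x[j := 0])" if "j \<in> {j1, j2}" for j
  proof -
    have "j < k" using that j by auto
    then have "hamming_adj k (x[j := 0]) x" by (rule hamming_adj_update_self)
    moreover have "x[j := 0] \<in> idx k s" using x \<open>0 < s\<close> by (rule list_update_in_idx)
    ultimately have "hamming_adj k (\<pi> (x[j := 0])) (\<pi> x)"
      using \<pi> x by (simp add: hamming_aut_def)
    then show ?thesis using fixed that by (auto simp: hamming_adj_sym)
  qed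
  have "\<pi> x = x \<or> \<pi> x = x[j1 := 0, j2 := 0]"
    using common_neighbour_of_two_zeroings[OF _ x j(1) j(3) \<open>j1 \<noteq> j2\<close> j(2) j(4)]
      adj permutes_in_image[OF \<pi>_perm] x by blast
  moreover have "x[j1 := 0, j2 := 0] \<noteq> x"
    using j \<open>j1 \<noteq> j2\<close> by (metis nth_list_update_eq nth_list_update_neq length_list_update
      x mem_idx_iff)
  ultimately show ?thesis
    using fixed(3) permutes_inj[OF \<pi>_perm] by (metis injD)
qed

lemma hamming_aut_fixes_all_if_fixes_axes:
  assumes \<pi>: "hamming_aut k s \<pi>" and k: "0 < k"
    and axes: "\<And>j a. j < k \<Longrightarrow> a < s \<Longrightarrow> \<pi> ((replicate k 0)[j := a]) = (replicate k 0)[j := a]"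
    and x: "x \<in> idx k s"
  shows "\<pi> x = x"
  using x
proof (induction "card (nonzero_coords k x)" arbitrary: x rule: less_induct)
  case less
  show ?case
  proof (cases "card (nonzero_coords k x) \<le> 1")
    case True
    then obtain j where "j < k" "x = (replicate k 0)[j := x ! j]"
      using axis_word_if_card_nonzero_coords_le_1[OF less.prems k] by blast
    then show ?thesis using axes less.prems by (metis mem_idx_iff)
  next
    case False
    then obtain j1 j2 where j: "j1 \<in> nonzero_coords k x" "j2 \<in> nonzero_coords k x" "j1 \<noteq> j2"
      using card_le_Suc0_iff_eq[OF finite_nonzero_coords] by auto
    then have "0 < s" using less.prems by (auto simp: nonzero_coords_def mem_idx_iff)
    have len: "length x = k" "length (x[j1 := 0]) = k" using less.prems by (simp_all add: mem_idx_iff)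
    have fewer: "card (nonzero_coords k x - {j} - J) < card (nonzero_coords k x)"
      if "j \<in> nonzero_coords k x" for j J
    proof -
      have "card (nonzero_coords k x - {j} - J) \<le> card (nonzero_coords k x - {j})"
        by (intro card_mono) (auto simp: finite_nonzero_coords)
      also have "\<dots> < card (nonzero_coords k x)"
        using card_Diff1_less[OF finite_nonzero_coords that] .
      finally show ?thesis .
    qed
    show ?thesis
    proof (rule hamming_aut_fixes_if_fixes_zeroings[OF \<pi> less.prems j])
      show "\<pi> (x[j1 := 0]) = x[j1 := 0]" "\<pi> (x[j2 := 0]) = x[j2 := 0]"
        using less.hyps[OF _ list_update_in_idx[OF less.prems \<open>0 < s\<close>]] fewer[of _ "{}"] j
        by (simp_all add: nonzero_coords_update_zero len)
      show "\<pi> (x[j1 := 0, j2 := 0]) = x[j1 := 0, j2 := 0]"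
        using less.hyps[OF _ list_update_in_idx[OF list_update_in_idx[OF less.prems \<open>0 < s\<close>] \<open>0 < s\<close>]]
          fewer[of j1 "{j2}"] j
        by (simp add: nonzero_coords_update_zero len)
    qed
  qed
qed

lemma hamming_aut_eqI_on_axes:
  assumes \<pi>1: "hamming_aut k s \<pi>1" and \<pi>2: "hamming_aut k s \<pi>2" and k: "0 < k"
    and axes: "\<And>j a. j < k \<Longrightarrow> a < s \<Longrightarrow> \<pi>1 ((replicate k 0)[j := a]) = \<pi>2 ((replicate k 0)[j := a])"
  shows "\<pi>1 = \<pi>2"
proof
  fix x
  have \<pi>2_perm: "\<pi>2 permutes idx k s" using \<pi>2 by (simp add: hamming_aut_def)
  have aut: "hamming_aut k s (inv \<pi>2 \<circ> \<pi>1)"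
    using hamming_aut_comp[OF hamming_aut_inv[OF \<pi>2] \<pi>1] .
  show "\<pi>1 x = \<pi>2 x"
  proof (cases "x \<in> idx k s")
    case True
    have "(inv \<pi>2 \<circ> \<pi>1) x = x"
      using hamming_aut_fixes_all_if_fixes_axes[OF aut k _ True] axes
      by (simp add: permutes_inverses(2)[OF \<pi>2_perm])
    then show ?thesis by (metis comp_apply permutes_inverses(1)[OF \<pi>2_perm])
  next
    case False
    moreover have "\<pi>1 permutes idx k s" using \<pi>1 by (simp add: hamming_aut_def)
    ultimately show ?thesis using \<pi>2_perm by (simp add: permutes_not_in)
  qed
qed

lemma hamming_aut_maps_axis_into_axis:
  assumes s: "1 < s" and \<pi>: "hamming_aut k s \<pi>" and zero: "\<pi> (replicate k 0) = replicate k 0"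
    and j: "j < k" and nz: "\<pi> ((replicate k 0)[j := 1]) ! j \<noteq> 0" and a: "a < s"
  shows "\<pi> ((replicate k 0)[j := a]) = (replicate k 0)[j := \<pi> ((replicate k 0)[j := a]) ! j]"
proof -
  have idx: "replicate k 0 \<in> idx k s" "(replicate k 0)[j := 1] \<in> idx k s" "(replicate k 0)[j := a] \<in> idx k s"
    using s a by (auto intro: zero_word_in_idx axis_word_in_idx)
  have adj: "hamming_adj k (\<pi> p) (\<pi> q)" if "p \<in> idx k s" "q \<in> idx k s" "hamming_adj k q p" for p q
    using \<pi> that hamming_adj_sym by (simp add: hamming_aut_def)
  have "hamming_adj k (replicate k 0) (\<pi> ((replicate k 0)[j := 1]))"
    using adj[OF idx(1,2)] hamming_adj_update_self[OF j] zero by simp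
  then have axis: "\<pi> ((replicate k 0)[j := 1]) ! m = 0" if "m < k" "m \<noteq> j" for m
    using on_axis_if_adj_zero j nz that by blast
  have "\<pi> ((replicate k 0)[j := a]) ! m = 0" if "m < k" "m \<noteq> j" for m
  proof (rule on_axis_if_adj_zero_and_axis_word[OF _ _ j nz axis that])
    show "hamming_adj k (replicate k 0) (\<pi> ((replicate k 0)[j := a]))"
      using adj[OF idx(1,3)] hamming_adj_update_self[OF j] zero by simp
    show "hamming_adj k (\<pi> ((replicate k 0)[j := 1])) (\<pi> ((replicate k 0)[j := a]))"
      using adj[OF idx(2,3)] hamming_adj_update[OF j] by simp
  qed
  moreover have "\<pi> ((replicate k 0)[j := a]) \<in> idx k s"
    using \<pi> idx(3) by (simp add: hamming_aut_def permutes_in_image)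
  ultimately show ?thesis
    using j by (intro idx_eqI[of _ k s]) (auto simp: mem_idx_iff nth_list_update)
qed


lemma permutes_if_maps_axis:
  assumes \<pi>: "\<pi> permutes idx k s" and j: "j < k"
    and axis: "\<And>a. a < s \<Longrightarrow> \<pi> ((replicate k 0)[j := a]) = (replicate k 0)[j := \<rho> a]"
    and outside: "\<And>a. a \<ge> s \<Longrightarrow> \<rho> a = a"
  shows "\<rho> permutes {..<s}"
proof (rule inj_imp_permutes)
  show "inj_on \<rho> {..<s}"
  proof (rule inj_onI)
    fix a b assume "a \<in> {..<s}" "b \<in> {..<s}" "\<rho> a = \<rho> b"
    then have "\<pi> ((replicate k 0)[j := a]) = \<pi> ((replicate k 0)[j := b])" using axis by simp
    then have "(replicate k 0)[j := a] ! j = (replicate k 0)[j := b] ! j"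
      using permutes_inj[OF \<pi>] by (metis injD)
    then show "a = b" using j by simp
  qed
  show "\<rho> a \<in> {..<s}" if "a \<in> {..<s}" for a
  proof -
    have "\<pi> ((replicate k 0)[j := a]) \<in> idx k s"
      using axis_word_in_idx[of a s k j] permutes_in_image[OF \<pi>] that by simp
    then have "\<pi> ((replicate k 0)[j := a]) ! j < s" using j by (simp add: mem_idx_iff)
    then show ?thesis using that j axis by simp
  qed
qed (use outside in auto)

lemma hamming_aut_in_G_iso_if_axes_stable:
  assumes s: "s \<ge> 2" and k: "k \<ge> 2" and \<pi>: "hamming_aut k s \<pi>"
    and zero: "\<pi> (replicate k 0) = replicate k 0"
    and nz: "\<And>j. j < k \<Longrightarrow> \<pi> ((replicate k 0)[j := 1]) ! j \<noteq> 0"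
  shows "\<pi> \<in> G_iso k s"
proof -
  have \<pi>_perm: "\<pi> permutes idx k s" using \<pi> by (simp add: hamming_aut_def)
  define \<rho> where "\<rho> j a = (if a < s then \<pi> ((replicate k 0)[j := a]) ! j else a)" for j a
  have axis: "\<pi> ((replicate k 0)[j := a]) = (replicate k 0)[j := \<rho> j a]" if "j < k" "a < s" for j a
    using hamming_aut_maps_axis_into_axis[OF _ \<pi> zero that(1) nz[OF that(1)] that(2)] s that
    by (simp add: \<rho>_def)
  have \<rho>_perm: "\<forall>j<k. \<rho> j permutes {..<s}"
  proof (intro allI impI)
    fix j assume j: "j < k"
    show "\<rho> j permutes {..<s}"
    proof (rule permutes_if_maps_axis[OF \<pi>_perm j])
      show "\<And>a. a < s \<Longrightarrow> \<pi> ((replicate k 0)[j := a]) = (replicate k 0)[j := \<rho> j a]"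
        by (rule axis[OF j])
    qed (simp add: \<rho>_def)
  qed
  have "\<rho> j 0 = 0" if "j < k" for j
  proof -
    have "(replicate k 0)[j := 0] = replicate k (0::nat)"
      using that by (simp add: list_update_same_conv)
    then show ?thesis using zero s that by (simp add: \<rho>_def)
  qed
  then have "\<pi> ((replicate k 0)[j := a]) = sym_perms k s \<rho> k ((replicate k 0)[j := a])"
    if "j < k" "a < s" for j a
    using axis that sym_perms_axis_word[OF \<rho>_perm] by simp
  then have "\<pi> = sym_perms k s \<rho> k"
    using \<rho>_perm k s
    by (intro hamming_aut_eqI_on_axes[OF \<pi> G_iso_hamming_aut]) (auto intro: sym_perms_in_G_iso)
  then show ?thesis using \<rho>_perm by (simp add: sym_perms_in_G_iso)
qed

lemma hamming_aut_fixing_zero_permutes_axes: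
  assumes s: "s \<ge> 2" and \<pi>: "hamming_aut k s \<pi>" and zero: "\<pi> (replicate k 0) = replicate k 0"
  obtains f where "f permutes {..<k}" "\<And>j. j < k \<Longrightarrow> \<pi> ((replicate k 0)[j := 1]) ! f j \<noteq> 0"
proof -
  have \<pi>_perm: "\<pi> permutes idx k s" using \<pi> by (simp add: hamming_aut_def)
  have idx: "replicate k 0 \<in> idx k s" "\<And>j. (replicate k 0)[j := 1] \<in> idx k s"
    using s by (auto intro: zero_word_in_idx axis_word_in_idx)
  have "\<exists>m<k. \<pi> ((replicate k 0)[j := 1]) ! m \<noteq> 0" if j: "j < k" for j
  proof (rule ccontr)
    assume "\<not> (\<exists>m<k. \<pi> ((replicate k 0)[j := 1]) ! m \<noteq> 0)"
    then have "\<pi> ((replicate k 0)[j := 1]) = \<pi> (replicate k 0)"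
      using zero idx permutes_in_image[OF \<pi>_perm] by (intro idx_eqI[of _ k s]) auto
    then have "(replicate k (0::nat))[j := 1] = replicate k 0"
      using permutes_inj[OF \<pi>_perm] by (metis injD)
    then show False using j by (metis nth_list_update_eq nth_replicate length_replicate zero_neq_one)
  qed
  note nz = this
  define f where "f j = (if j < k then SOME m. m < k \<and> \<pi> ((replicate k 0)[j := 1]) ! m \<noteq> 0 else j)"
    for j
  have f: "f j < k \<and> \<pi> ((replicate k 0)[j := 1]) ! f j \<noteq> 0" if "j < k" for j
    using someI_ex[OF nz[OF that]] that by (simp add: f_def)
  have on_axis: "\<pi> ((replicate k 0)[j := 1]) ! m = 0" if "j < k" "m < k" "m \<noteq> f j" for j m
  proof (rule on_axis_if_adj_zero[of k _ "f j"])
    have "hamming_adj k (\<pi> ((replicate k 0)[j := 1])) (\<pi> (replicate k 0))"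
      using \<pi> idx hamming_adj_update_self[OF \<open>j < k\<close>, of "replicate k 0" 1]
      by (simp add: hamming_aut_def)
    then show "hamming_adj k (replicate k 0) (\<pi> ((replicate k 0)[j := 1]))"
      using zero by (simp add: hamming_adj_sym)
  qed (use f that in auto)
  have "inj_on f {..<k}"
  proof (rule inj_onI)
    fix i j assume i: "i \<in> {..<k}" and j: "j \<in> {..<k}" and eq: "f i = f j"
    have "hamming_adj k (\<pi> ((replicate k 0)[i := 1])) (\<pi> ((replicate k 0)[j := 1]))"
      unfolding hamming_adj_def using on_axis i j f eq by (metis lessThan_iff)
    then have "hamming_adj k ((replicate k 0)[i := 1]) ((replicate k 0)[j := 1])"
      using \<pi> idx by (simp add: hamming_aut_def)
    then show "i = j" using axis_words_not_adj i j by blast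
  qed
  then have "f permutes {..<k}"
    using f by (intro inj_imp_permutes) (auto simp: f_def)
  then show thesis using f that by blast
qed

lemma hamming_aut_in_G_iso_if_fixes_zero:
  assumes s: "s \<ge> 2" and k: "k \<ge> 2" and \<pi>: "hamming_aut k s \<pi>"
    and zero: "\<pi> (replicate k 0) = replicate k 0"
  shows "\<pi> \<in> G_iso k s"
proof -
  obtain f where f: "f permutes {..<k}" "\<And>j. j < k \<Longrightarrow> \<pi> ((replicate k 0)[j := 1]) ! f j \<noteq> 0"
    using hamming_aut_fixing_zero_permutes_axes[OF s \<pi> zero] by blast
  have \<pi>_perm: "\<pi> permutes idx k s" using \<pi> by (simp add: hamming_aut_def)
  have g: "coord_perm k s f \<in> G_iso k s"
    using f(1) by (intro iso_gens_in_G_iso) (auto simp: iso_gens_def)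
  have "coord_perm k s f \<circ> \<pi> \<in> G_iso k s"
  proof (rule hamming_aut_in_G_iso_if_axes_stable[OF s k])
    show "hamming_aut k s (coord_perm k s f \<circ> \<pi>)"
      using hamming_aut_comp[OF G_iso_hamming_aut[OF s k g] \<pi>] .
    have "replicate k 0 \<in> idx k s" using s by (intro zero_word_in_idx) simp
    then show "(coord_perm k s f \<circ> \<pi>) (replicate k 0) = replicate k 0"
      using zero permutes_in_image[OF f(1)]
      by (intro idx_eqI[of _ k s]) (auto simp: coord_perm_in_idx[OF f(1)] nth_coord_perm[OF f(1)])
    fix j assume "j < k"
    moreover have "\<pi> ((replicate k 0)[j := 1]) \<in> idx k s"
      using s permutes_in_image[OF \<pi>_perm] by (simp add: axis_word_in_idx)
    ultimately show "(coord_perm k s f \<circ> \<pi>) ((replicate k 0)[j := 1]) ! j \<noteq> 0"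
      using f(2) by (simp add: nth_coord_perm[OF f(1)])
  qed
  then show ?thesis using G_iso_cancel_left[OF g] by blast
qed

text \<open>Symbol transpositions move the image of the zero word back to the zero word.\<close>
lemma hamming_aut_in_G_iso:
  assumes s: "s \<ge> 2" and k: "k \<ge> 2" and \<pi>: "hamming_aut k s \<pi>"
  shows "\<pi> \<in> G_iso k s"
proof -
  have \<pi>_perm: "\<pi> permutes idx k s" using \<pi> by (simp add: hamming_aut_def)
  have zero_idx: "replicate k 0 \<in> idx k s" using s by (intro zero_word_in_idx) simp
  define v where "v = \<pi> (replicate k 0)"
  have v: "v \<in> idx k s" using zero_idx permutes_in_image[OF \<pi>_perm] by (simp add: v_def)
  define \<rho> where "\<rho> j = transpose 0 (v ! j)" for j
  have \<rho>: "\<forall>j<k. \<rho> j permutes {..<s}"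
    using v s by (auto simp: \<rho>_def mem_idx_iff intro!: permutes_swap_id)
  define h where "h = sym_perms k s \<rho> k"
  have h: "h \<in> G_iso k s" using sym_perms_in_G_iso[OF \<rho>] by (simp add: h_def)
  have "h (replicate k 0) = v"
    using zero_idx v by (intro idx_eqI[of _ k s]) (auto simp: h_def \<rho>_def sym_perms_in_idx[OF \<rho>] nth_sym_perms[OF \<rho>])
  then have "(inv h \<circ> \<pi>) (replicate k 0) = replicate k 0"
    using permutes_inv_eq[OF G_iso_permutes[OF h]] by (simp add: v_def)
  moreover have "hamming_aut k s (inv h \<circ> \<pi>)"
    using hamming_aut_comp[OF G_iso_hamming_aut[OF s k G_iso_inv[OF h]] \<pi>] .
  ultimately have "inv h \<circ> \<pi> \<in> G_iso k s"
    using hamming_aut_in_G_iso_if_fixes_zero[OF s k] by blast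
  then show ?thesis using G_iso_cancel_left[OF G_iso_inv[OF h]] by blast
qed

lemma G_form_eq_G_iso:
  assumes "s \<ge> 2" "1 \<le> t" "t \<le> k - 1"
  shows "G_form k s t lam pmax = G_iso k s"
proof
  have "k \<ge> 2" using assms(2,3) by simp
  then show "G_form k s t lam pmax \<subseteq> G_iso k s"
    using G_form_hamming_aut[OF assms] hamming_aut_in_G_iso[OF assms(1)] by blast
qed (rule G_iso_subset_G_form[OF assms(1)])

theorem lemma8:
  fixes k s t N lam pmax :: nat
  assumes "s \<ge> 2" and "1 \<le> t" and "t \<le> k - 1"
    and "N > 0" and "s ^ t dvd N" and "lam = N div s ^ t"
    and "pmax > 0" and "pmax \<le> lam"
  shows "G_form k s t lam pmax = G_iso k s
       \<and> G_form k s t lam pmax \<subseteq> G_LP k s t lam pmax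
       \<and> card (G_LP k s t lam pmax) \<ge> fact k * fact s ^ k"
proof -
  (* Only s \<ge> 2 and 1 \<le> t \<le> k - 1 matter: the symmetries do not depend on the right-hand
     sides lam and pmax. *)
  have eq: "G_form k s t lam pmax = G_iso k s" using G_form_eq_G_iso[OF assms(1-3)] .
  have sub: "G_form k s t lam pmax \<subseteq> G_LP k s t lam pmax" by (rule G_form_subset_G_LP)
  have "finite (G_LP k s t lam pmax)"
    using finite_permutations[OF finite_idx] by (rule finite_subset[rotated]) (auto simp: G_LP_def)
  then have "card (G_iso k s) \<le> card (G_LP k s t lam pmax)"
    using card_mono sub eq by metis
  then show ?thesis using eq sub card_G_iso_ge[OF assms(1), of k] by simp
qed

end
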